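(* In the changepoint model of the context, for $0<i<n$ and $0\le j\le i$, $$\big(X_i\mid C_i=j,\,C_{i+1}=i+1,\,Y_{1:n}=y_{1:n}\big)\sim H_{ji},$$ and for $i=n$, $(X_n\mid C_n=j,\,Y_{1:n}=y_{1:n})\sim H_{jn}$.
   Context: Model: Let $n\ge 1$ and fix observed data $y_1,\dots,y_n$. Let $(\mathbb X,\mathcal X)$, $(\mathbb Y,\mathcal Y)$ be standard Borel spaces, $\psi$ a $\sigma$-finite measure on $(\mathbb Y,\mathcal Y)$, $\mathcal J$ a probability measure on $(\mathbb X,\mathcal X)$, and $q_{ji}\in[0,1]$ for $0\le j<i\le n$. The model consists of random variables $C_i\in\{0,\dots,i\}$, $X_i\in\mathbb X$, $Y_i\in\mathbb Y$, $i=1,\dots,n$, with joint law factorizing as: $P(C_1=0)=q_{01}$, $P(C_1=1)=1-q_{01}$; for $i\ge2$, $C_i$ depends on the past only through $C_{i-1}$, with $P(C_i=j\mid C_{i-1}=j)=q_{ji}$ and $P(C_i=i\mid C_{i-1}=j)=1-q_{ji}$ ($0\le j\le i-1$); $X_1\sim\mathcal J$ independent of $C_1$; for $i\ge 2$, $X_i$ depends on the past only through $(C_i,X_{i-1})$, with $X_i\sim\mathcal J$ if $C_i=i$ and $X_i=X_{i-1}$ if $C_i<i$; $Y_i$ depends on all other variables only through $X_i$, with density $p(Y_i=y\mid X_i=x)$ w.r.t. $\psi$. Assume $\int\prod_{\ell=j}^i p(Y_\ell=y_\ell\mid X_\ell=x)\,\mathcal J(dx)>0$ for all $0<j\le i\le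 n$. $Y_{a:b}=y_{a:b}$ abbreviates $Y_a=y_a,\dots,Y_b=y_b$. Notation: $H_{ji}=P(X_i\in\cdot\mid C_i=j,Y_{1:i}=y_{1:i})$. *)

theory Defs
  imports "HOL-Probability.Probability"
begin

text \<open>The changepoint path C_1..C_n is built as a Markov chain
by iterated binds: at time 1, C_1 = 0 with probability q 0 1, else C_1 = 1; at time
i+1 >= 2, C_(i+1) = C_i with probability q (C_i) (i+1), else C_(i+1) = i+1.
Entries of the path outside 1..n are 0.\<close>

primrec cp_path :: "(nat \<Rightarrow> nat \<Rightarrow> real) \<Rightarrow> nat \<Rightarrow> (nat \<Rightarrow> nat) pmf" where
  "cp_path q 0 = return_pmf (\<lambda>_. 0)"
| "cp_path q (Suc i) = bind_pmf (cp_path q i)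
     (\<lambda>c. map_pmf
        (\<lambda>b. c(Suc i := (if b then (if i = 0 then 0 else c i) else Suc i)))
        (bernoulli_pmf (q (if i = 0 then 0 else c i) (Suc i))))"

text \<open>Joint law of the changepoint path and of n independent fresh draws Z_1..Z_n from J.
The latent state is X_i = Z_(max 1 C_i): a fresh draw at each changepoint (C_i = i),
X_1 = Z_1, and X_i = X_(i-1) otherwise.\<close>

definition cp_model :: "(nat \<Rightarrow> nat \<Rightarrow> real) \<Rightarrow> 'x measure \<Rightarrow> nat
    \<Rightarrow> ((nat \<Rightarrow> nat) \<times> (nat \<Rightarrow> 'x)) measure" where
  "cp_model q J n = measure_pmf (cp_path q n) \<Otimes>\<^sub>M PiM {1..n} (\<lambda>_. J)"

definition cpC :: "nat \<Rightarrow> (nat \<Rightarrow> nat) \<times> (nat \<Rightarrow> 'x) \<Rightarrow> nat" where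
  "cpC i \<omega> = fst \<omega> i"

definition cpX :: "nat \<Rightarrow> (nat \<Rightarrow> nat) \<times> (nat \<Rightarrow> 'x) \<Rightarrow> 'x" where
  "cpX i \<omega> = snd \<omega> (max 1 (fst \<omega> i))"

definition cp_lik :: "('x \<Rightarrow> 'y \<Rightarrow> real) \<Rightarrow> (nat \<Rightarrow> 'y) \<Rightarrow> nat
    \<Rightarrow> (nat \<Rightarrow> nat) \<times> (nat \<Rightarrow> 'x) \<Rightarrow> ennreal" where
  "cp_lik p y m \<omega> = (\<Prod>l\<in>{1..m}. ennreal (p (cpX l \<omega>) (y l)))"

text \<open>Posterior probability P(B | E, Y_(1:m) = y_(1:m)) given by Bayes' formula
(conditioning on the observations via their density).\<close>

definition cp_post :: "'a measure \<Rightarrow> ('a \<Rightarrow> ennreal) \<Rightarrow> 'a set \<Rightarrow> 'a set \<Rightarrow> ennreal" where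
  "cp_post M L E B =
     (\<integral>\<^sup>+\<omega>. indicator (E \<inter> B) \<omega> * L \<omega> \<partial>M) / (\<integral>\<^sup>+\<omega>. indicator E \<omega> * L \<omega> \<partial>M)"

end

theory Submission
  imports Defs
begin

text \<open>Fix the changepoint path c. The latent state of observation l is the fresh draw
z (max 1 (c l)), so the likelihood of y_1..y_n given c is a product over the blocks of times
sharing a draw of integrals against J. If c has a changepoint at i + 1, the blocks of the times
1..i and of the times i + 1..n are disjoint, hence the likelihood factors into the part for
y_1..y_i (which carries the event X_i \<in> A) and a future factor depending only on c on
{i+1..n}. The path is a Markov chain that forgets its past at a changepoint, so averaging over
the path the future factor contributes a constant W = (1 - q j (i+1)) * E[future factor], and the
posterior numerator equals W times the numerator of the posterior given C_i = j and y_1..y_i.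
The segment hypotheses make W positive and finite, so it cancels in the Bayes ratio.\<close>

section \<open>Changepoint paths\<close>

text \<open>The transition of cp_path without its case distinction at time 1, which is redundant
because c 0 = 0 on the support of cp_path (see cp_path_Suc_step).\<close>

definition cp_step :: "(nat \<Rightarrow> nat \<Rightarrow> real) \<Rightarrow> nat \<Rightarrow> (nat \<Rightarrow> nat) \<Rightarrow> (nat \<Rightarrow> nat) pmf" where
  "cp_step q k c =
     map_pmf (\<lambda>b. c(Suc k := if b then c k else Suc k)) (bernoulli_pmf (q (c k) (Suc k)))"

primrec cp_ext :: "(nat \<Rightarrow> nat \<Rightarrow> real) \<Rightarrow> nat \<Rightarrow> nat \<Rightarrow> (nat \<Rightarrow> nat) \<Rightarrow> (nat \<Rightarrow> nat) pmf" where
  "cp_ext q k 0 c = return_pmf c"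
| "cp_ext q k (Suc d) c = bind_pmf (cp_ext q k d c) (cp_step q (k + d))"

definition cp_admissible :: "nat \<Rightarrow> nat \<Rightarrow> (nat \<Rightarrow> nat) \<Rightarrow> bool" where
  "cp_admissible a b c \<longleftrightarrow> (\<forall>l. a \<le> l \<longrightarrow> l < b \<longrightarrow> c (Suc l) = c l \<or> c (Suc l) = Suc l)"

lemma cp_path_at_0: "c \<in> set_pmf (cp_path q k) \<Longrightarrow> c 0 = 0"
  by (induction k arbitrary: c) auto

lemma cp_path_Suc_step: "cp_path q (Suc k) = bind_pmf (cp_path q k) (cp_step q k)"
proof (unfold cp_path.simps(2), rule bind_pmf_cong[OF refl])
  fix c assume "c \<in> set_pmf (cp_path q k)"
  then have "(if k = 0 then 0 else c k) = c k"
    using cp_path_at_0 by simp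
  then show "map_pmf (\<lambda>b. c(Suc k := if b then if k = 0 then 0 else c k else Suc k))
      (bernoulli_pmf (q (if k = 0 then 0 else c k) (Suc k))) = cp_step q k c"
    unfolding cp_step_def by (simp only:)
qed

lemma cp_path_eq_cp_ext: "cp_path q m = cp_ext q 0 m (\<lambda>_. 0)"
  by (induction m) (simp_all add: cp_path_Suc_step del: cp_path.simps(2))

lemma cp_ext_add: "cp_ext q k (d + e) c = bind_pmf (cp_ext q k d c) (cp_ext q (k + d) e)"
  by (induction e) (simp_all add: bind_return_pmf' bind_assoc_pmf add.assoc)

lemma cp_path_add: "cp_path q (k + d) = bind_pmf (cp_path q k) (cp_ext q k d)"
  by (simp add: cp_path_eq_cp_ext cp_ext_add)

lemma cp_admissible_upd:
  assumes "cp_admissible a b c" and "v = c b \<or> v = Suc b"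
  shows "cp_admissible a (Suc b) (c(Suc b := v))"
  using assms unfolding cp_admissible_def by (simp add: less_Suc_eq)

lemma set_cp_ext:
  assumes "c' \<in> set_pmf (cp_ext q k d c)"
  shows "(\<forall>l. l \<le> k \<or> k + d < l \<longrightarrow> c' l = c l) \<and> cp_admissible k (k + d) c'"
  using assms
proof (induction d arbitrary: c')
  case (Suc d)
  from Suc.prems obtain c1 where c1: "c1 \<in> set_pmf (cp_ext q k d c)"
    and "c' \<in> set_pmf (cp_step q (k + d) c1)"
    by auto
  from this(2) obtain b where c': "c' = c1(Suc (k + d) := if b then c1 (k + d) else Suc (k + d))"
    unfolding cp_step_def by auto
  have "cp_admissible k (k + Suc d) c'"
    unfolding c' using Suc.IH[OF c1] by (simp add: cp_admissible_upd)
  moreover have "c' l = c l" if "l \<le> k \<or> k + Suc d < l" for l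
    using Suc.IH[OF c1] that unfolding c' by auto
  ultimately show ?case by blast
qed (simp add: cp_admissible_def)

lemma set_cp_path:
  assumes "c \<in> set_pmf (cp_path q m)"
  shows "cp_admissible 0 m c" and "m < l \<Longrightarrow> c l = 0"
  using set_cp_ext[of c q 0 m "\<lambda>_. 0"] assms by (simp_all add: cp_path_eq_cp_ext)

lemma cp_admissible_le:
  assumes "cp_admissible a b c" "c a \<le> a" "a \<le> l" "l \<le> b"
  shows "c l \<le> l"
  using assms(3,4)
proof (induction l rule: dec_induct)
  case (step l)
  then have "c (Suc l) = c l \<or> c (Suc l) = Suc l"
    using assms(1) unfolding cp_admissible_def by simp
  then show ?case using step by auto
qed (use assms in simp)

lemma cp_admissible_mono:
  assumes "cp_admissible a b c" "c a \<le> a"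
  shows "mono_on {a..b} c"
proof (rule mono_onI)
  fix l l' assume "l \<in> {a..b}" "l' \<in> {a..b}" "l \<le> l'"
  from \<open>l \<le> l'\<close> \<open>l' \<in> {a..b}\<close> show "c l \<le> c l'"
  proof (induction l' rule: dec_induct)
    case (step m)
    have "c m \<le> m" using cp_admissible_le[OF assms] \<open>l \<in> {a..b}\<close> step by simp
    moreover have "c (Suc m) = c m \<or> c (Suc m) = Suc m"
      using assms(1) \<open>l \<in> {a..b}\<close> step unfolding cp_admissible_def by simp
    moreover have "c l \<le> c m" using step \<open>l \<in> {a..b}\<close> by simp
    ultimately show ?case by auto
  qed simp
qed

lemma cp_path_le:
  assumes "c \<in> set_pmf (cp_path q m)"
  shows "c l \<le> l"
proof (cases "l \<le> m")
  case True
  then show ?thesis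
    using cp_admissible_le[OF set_cp_path(1)[OF assms]] cp_path_at_0[OF assms] by simp
qed (simp add: set_cp_path(2)[OF assms])

lemma cp_path_mono:
  assumes "c \<in> set_pmf (cp_path q m)"
  shows "mono_on {0..m} c"
  using cp_admissible_mono[OF set_cp_path(1)[OF assms]] cp_path_at_0[OF assms] by simp

lemma level_set_mono_on_interval:
  fixes f :: "nat \<Rightarrow> 'b::linorder"
  assumes "mono_on {a..b} f"
  shows "\<exists>u v. {l \<in> {a..b}. f l = t} = {u..v}"
proof (cases "{l \<in> {a..b}. f l = t} = {}")
  case True
  then show ?thesis by (intro exI[of _ 1] exI[of _ 0]) simp
next
  case False
  let ?S = "{l \<in> {a..b}. f l = t}"
  have "?S = {Min ?S..Max ?S}"
  proof
    show "{Min ?S..Max ?S} \<subseteq> ?S"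
    proof
      fix l assume l: "l \<in> {Min ?S..Max ?S}"
      have "finite ?S" by simp
      then have mn: "Min ?S \<in> ?S" and mx: "Max ?S \<in> ?S" using False by (rule Min_in, rule Max_in)
      then have lab: "l \<in> {a..b}" using l by auto
      have "f (Min ?S) \<le> f l" using mn lab l by (intro mono_onD[OF assms]) auto
      moreover have "f l \<le> f (Max ?S)" using mx lab l by (intro mono_onD[OF assms]) auto
      ultimately show "l \<in> ?S" using mn mx lab by auto
    qed
  qed auto
  then show ?thesis by blast
qed

section \<open>Conditioning the path on its past\<close>

lemma nn_integral_cp_path_split:
  assumes "k \<le> n" and G: "\<And>c c'. (\<forall>l\<le>k. c l = c' l) \<Longrightarrow> G c = G c'"
  shows "(\<integral>\<^sup>+c. G c * K c \<partial>cp_path q n)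
       = (\<integral>\<^sup>+c. G c * (\<integral>\<^sup>+c'. K c' \<partial>cp_ext q k (n - k) c) \<partial>cp_path q k)"
proof -
  have "cp_path q n = bind_pmf (cp_path q k) (cp_ext q k (n - k))"
    using cp_path_add[of q k "n - k"] assms(1) by simp
  then have "(\<integral>\<^sup>+c. G c * K c \<partial>cp_path q n)
      = (\<integral>\<^sup>+c. \<integral>\<^sup>+c'. G c' * K c' \<partial>cp_ext q k (n - k) c \<partial>cp_path q k)"
    by simp
  also have "\<dots> = (\<integral>\<^sup>+c. \<integral>\<^sup>+c'. G c * K c' \<partial>cp_ext q k (n - k) c \<partial>cp_path q k)"
  proof (rule nn_integral_cong)
    fix c
    have "G c' = G c" if "c' \<in> set_pmf (cp_ext q k (n - k) c)" for c'
      using set_cp_ext[OF that] by (intro G) auto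
    then show "(\<integral>\<^sup>+c'. G c' * K c' \<partial>cp_ext q k (n - k) c)
        = (\<integral>\<^sup>+c'. G c * K c' \<partial>cp_ext q k (n - k) c)"
      by (intro nn_integral_cong_AE) (simp add: AE_measure_pmf_iff)
  qed
  finally show ?thesis by (simp add: nn_integral_cmult)
qed

lemma nn_integral_cp_path_prefix:
  assumes "k \<le> n" and G: "\<And>c c'. (\<forall>l\<le>k. c l = c' l) \<Longrightarrow> G c = G c'"
  shows "(\<integral>\<^sup>+c. G c \<partial>cp_path q n) = (\<integral>\<^sup>+c. G c \<partial>cp_path q k)"
  using nn_integral_cp_path_split[OF assms, where K = "\<lambda>_. 1"]
  by (simp add: measure_pmf.emeasure_space_1)

lemma nn_integral_cp_ext_local:
  assumes "c1 k = c2 k" and K: "\<And>c c'. (\<forall>l\<in>{k..k + d}. c l = c' l) \<Longrightarrow> K c = K c'"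
  shows "(\<integral>\<^sup>+c. K c \<partial>cp_ext q k d c1) = (\<integral>\<^sup>+c. K c \<partial>cp_ext q k d c2)"
  using K
proof (induction d arbitrary: K)
  case 0
  have "K c1 = K c2" using assms(1) by (intro "0") simp
  then show ?case by simp
next
  case (Suc d)
  let ?G = "\<lambda>c. \<integral>\<^sup>+c'. K c' \<partial>cp_step q (k + d) c"
  have "?G c = ?G c'" if agree: "\<forall>l\<in>{k..k + d}. c l = c' l" for c c'
  proof -
    have "c (k + d) = c' (k + d)" using agree by simp
    have "?G c = (\<integral>\<^sup>+b. K (c(Suc (k + d) := if b then c (k + d) else Suc (k + d)))
        \<partial>bernoulli_pmf (q (c (k + d)) (Suc (k + d))))"
      by (simp add: cp_step_def)
    also have "\<dots> = (\<integral>\<^sup>+b. K (c'(Suc (k + d) := if b then c' (k + d) else Suc (k + d)))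
        \<partial>bernoulli_pmf (q (c' (k + d)) (Suc (k + d))))"
      unfolding \<open>c (k + d) = c' (k + d)\<close> using agree by (intro nn_integral_cong Suc.prems) auto
    also have "\<dots> = ?G c'"
      by (simp add: cp_step_def)
    finally show ?thesis .
  qed
  then have "(\<integral>\<^sup>+c. ?G c \<partial>cp_ext q k d c1) = (\<integral>\<^sup>+c. ?G c \<partial>cp_ext q k d c2)"
    by (rule Suc.IH)
  then show ?case by simp
qed

text \<open>By nn_integral_cp_ext_local, the start (\<lambda>_. k) can be replaced by any path c with
c k = k.\<close>

definition cp_renewal ::
    "(nat \<Rightarrow> nat \<Rightarrow> real) \<Rightarrow> nat \<Rightarrow> nat \<Rightarrow> ((nat \<Rightarrow> nat) \<Rightarrow> ennreal) \<Rightarrow> ennreal" where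
  "cp_renewal q k d K = (\<integral>\<^sup>+c. K c \<partial>cp_ext q k d (\<lambda>_. k))"

lemma nn_integral_cp_path_renewal:
  assumes "k \<le> n"
    and H: "\<And>c c'. (\<forall>l\<le>k. c l = c' l) \<Longrightarrow> H c = H c'"
    and K: "\<And>c c'. (\<forall>l\<in>{k..n}. c l = c' l) \<Longrightarrow> K c = K c'"
  shows "(\<integral>\<^sup>+c. indicator {c. c k = k} c * H c * K c \<partial>cp_path q n)
       = cp_renewal q k (n - k) K * (\<integral>\<^sup>+c. indicator {c. c k = k} c * H c \<partial>cp_path q k)"
proof -
  have "(\<integral>\<^sup>+c. indicator {c. c k = k} c * H c * K c \<partial>cp_path q n)
      = (\<integral>\<^sup>+c. indicator {c. c k = k} c * H c * (\<integral>\<^sup>+c'. K c' \<partial>cp_ext q k (n - k) c) \<partial>cp_path q k)"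
    using assms(1) by (intro nn_integral_cp_path_split) (auto simp: indicator_def intro!: H)
  also have "\<dots> = (\<integral>\<^sup>+c. indicator {c. c k = k} c * H c * cp_renewal q k (n - k) K \<partial>cp_path q k)"
  proof (rule nn_integral_cong)
    fix c
    have "(\<integral>\<^sup>+c'. K c' \<partial>cp_ext q k (n - k) c) = cp_renewal q k (n - k) K" if "c k = k"
      unfolding cp_renewal_def using that assms(1) by (intro nn_integral_cp_ext_local K) auto
    then show "indicator {c. c k = k} c * H c * (\<integral>\<^sup>+c'. K c' \<partial>cp_ext q k (n - k) c)
        = indicator {c. c k = k} c * H c * cp_renewal q k (n - k) K"
      by (cases "c k = k") auto
  qed
  also have "\<dots> = cp_renewal q k (n - k) K * (\<integral>\<^sup>+c. indicator {c. c k = k} c * H c \<partial>cp_path q k)"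
    by (subst nn_integral_cmult[symmetric]) (simp_all add: mult_ac)
  finally show ?thesis .
qed

lemma nn_integral_cp_path_changepoint_step:
  assumes "j \<le> i" "0 \<le> q j (Suc i)" "q j (Suc i) \<le> 1"
    and Phi: "\<And>c c'. (\<forall>l\<le>i. c l = c' l) \<Longrightarrow> Phi c = Phi c'"
  shows "(\<integral>\<^sup>+c. indicator {c. c i = j \<and> c (Suc i) = Suc i} c * Phi c \<partial>cp_path q (Suc i))
       = ennreal (1 - q j (Suc i)) * (\<integral>\<^sup>+c. indicator {c. c i = j} c * Phi c \<partial>cp_path q i)"
proof -
  let ?F = "\<lambda>c. indicator {c. c i = j \<and> c (Suc i) = Suc i} c * Phi c"
  have "(\<integral>\<^sup>+c. ?F c \<partial>cp_path q (Suc i)) = (\<integral>\<^sup>+c. \<integral>\<^sup>+c'. ?F c' \<partial>cp_step q i c \<partial>cp_path q i)"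
    by (simp add: cp_path_Suc_step del: cp_path.simps)
  also have "\<dots> = (\<integral>\<^sup>+c. ennreal (1 - q j (Suc i)) * (indicator {c. c i = j} c * Phi c)
      \<partial>cp_path q i)"
  proof (rule nn_integral_cong)
    fix c
    have "Phi (c(Suc i := v)) = Phi c" for v by (intro Phi) simp
    moreover have "c i \<noteq> Suc i" if "c i = j" using that assms(1) by simp
    ultimately show "(\<integral>\<^sup>+c'. ?F c' \<partial>cp_step q i c)
        = ennreal (1 - q j (Suc i)) * (indicator {c. c i = j} c * Phi c)"
      using assms(2,3) by (cases "c i = j") (simp_all add: cp_step_def indicator_def mult.commute)
  qed
  finally show ?thesis by (simp add: nn_integral_cmult)
qed

lemma nn_integral_cp_path_changepoint:
  assumes "i < n" "j \<le> i" "0 \<le> q j (Suc i)" "q j (Suc i) \<le> 1"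
    and Phi: "\<And>c c'. (\<forall>l\<le>i. c l = c' l) \<Longrightarrow> Phi c = Phi c'"
    and K: "\<And>c c'. (\<forall>l\<in>{Suc i..n}. c l = c' l) \<Longrightarrow> K c = K c'"
  shows "(\<integral>\<^sup>+c. indicator {c. c i = j \<and> c (Suc i) = Suc i} c * Phi c * K c \<partial>cp_path q n)
       = ennreal (1 - q j (Suc i)) * cp_renewal q (Suc i) (n - Suc i) K
         * (\<integral>\<^sup>+c. indicator {c. c i = j} c * Phi c \<partial>cp_path q i)"
proof -
  let ?H = "\<lambda>c. indicator {c. c i = j} c * Phi c"
  have ind: "indicator {c. c i = j \<and> c (Suc i) = Suc i} c
      = indicator {c. c (Suc i) = Suc i} c * (indicator {c. c i = j} c :: ennreal)"
    for c :: "nat \<Rightarrow> nat"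
    by (auto simp: indicator_def)
  have "(\<integral>\<^sup>+c. indicator {c. c i = j \<and> c (Suc i) = Suc i} c * Phi c * K c \<partial>cp_path q n)
      = (\<integral>\<^sup>+c. indicator {c. c (Suc i) = Suc i} c * ?H c * K c \<partial>cp_path q n)"
    by (simp add: ind mult.assoc)
  also have "\<dots> = cp_renewal q (Suc i) (n - Suc i) K
      * (\<integral>\<^sup>+c. indicator {c. c (Suc i) = Suc i} c * ?H c \<partial>cp_path q (Suc i))"
    using assms(1) by (intro nn_integral_cp_path_renewal K) (auto simp: indicator_def intro!: Phi)
  also have "(\<integral>\<^sup>+c. indicator {c. c (Suc i) = Suc i} c * ?H c \<partial>cp_path q (Suc i))
      = ennreal (1 - q j (Suc i)) * (\<integral>\<^sup>+c. ?H c \<partial>cp_path q i)"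
    using nn_integral_cp_path_changepoint_step[where i = i and j = j and q = q and Phi = Phi,
        OF assms(2-4) Phi]
    by (simp add: ind mult.assoc)
  finally show ?thesis by (simp add: mult_ac)
qed

lemma cp_stay_prob_lt_1:
  assumes "i < n" "j \<le> i" "0 \<le> q j (Suc i)" "q j (Suc i) \<le> 1"
    and pos: "0 < measure_pmf.prob (cp_path q n) {c. c i = j \<and> c (Suc i) = Suc i}"
  shows "q j (Suc i) < 1"
proof (rule ccontr)
  assume "\<not> q j (Suc i) < 1"
  then have "ennreal (1 - q j (Suc i)) = 0"
    by (simp add: ennreal_eq_0_iff)
  moreover have "emeasure (cp_path q n) {c. c i = j \<and> c (Suc i) = Suc i}
      = ennreal (1 - q j (Suc i)) * cp_renewal q (Suc i) (n - Suc i) (\<lambda>_. 1)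
        * (\<integral>\<^sup>+c. indicator {c. c i = j} c * 1 \<partial>cp_path q i)"
    using nn_integral_cp_path_changepoint[where i = i and j = j and q = q
        and Phi = "\<lambda>_. 1" and K = "\<lambda>_. 1", OF assms(1-4)]
    by simp
  ultimately show False
    using pos by (simp add: measure_pmf.emeasure_eq_measure)
qed

lemma finite_set_cp_ext: "finite (set_pmf (cp_ext q k d c))"
  by (induction d) (auto simp: cp_step_def)

lemma nn_integral_pmf_pos_finite:
  fixes f :: "'a \<Rightarrow> ennreal"
  assumes "finite (set_pmf M)" and f: "\<And>x. x \<in> set_pmf M \<Longrightarrow> 0 < f x \<and> f x < \<infinity>"
  shows "0 < (\<integral>\<^sup>+x. f x \<partial>M)" and "(\<integral>\<^sup>+x. f x \<partial>M) < \<infinity>"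
proof -
  have sum: "(\<integral>\<^sup>+x. f x \<partial>M) = (\<Sum>x\<in>set_pmf M. f x * pmf M x)"
    using assms(1) by (rule nn_integral_measure_pmf_finite) simp
  obtain x0 where x0: "x0 \<in> set_pmf M" using set_pmf_not_empty[of M] by blast
  have "0 < f x0" using f x0 by blast
  moreover have "0 < ennreal (pmf M x0)" using pmf_positive[OF x0] by simp
  ultimately have "0 < f x0 * pmf M x0" by (simp add: ennreal_zero_less_mult_iff)
  then show "0 < (\<integral>\<^sup>+x. f x \<partial>M)"
    unfolding sum using assms(1) x0 by (intro sum_pos2) auto
  show "(\<integral>\<^sup>+x. f x \<partial>M) < \<infinity>"
    unfolding sum using assms f by (simp add: ennreal_mult_less_top)
qed

section \<open>The likelihood given the path\<close>

lemma nn_integral_PiM_grouped_prod: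
  fixes h :: "'x \<Rightarrow> ennreal" and f :: "'l \<Rightarrow> 'x \<Rightarrow> ennreal" and \<sigma> :: "'l \<Rightarrow> 'i"
  assumes "sigma_finite_measure J" and I: "finite I" "k0 \<in> I" and S: "finite S" "\<sigma> ` S \<subseteq> I"
    and [measurable]: "h \<in> borel_measurable J" "\<And>l. f l \<in> borel_measurable J"
  shows "(\<integral>\<^sup>+z. h (z k0) * (\<Prod>l\<in>S. f l (z (\<sigma> l))) \<partial>PiM I (\<lambda>_. J))
       = (\<Prod>k\<in>I. \<integral>\<^sup>+x. (if k = k0 then h x else 1) * (\<Prod>l\<in>{l\<in>S. \<sigma> l = k}. f l x) \<partial>J)"
proof -
  interpret product_sigma_finite "\<lambda>_. J"
    using assms(1) by (simp add: product_sigma_finite_def)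
  have "h (z k0) * (\<Prod>l\<in>S. f l (z (\<sigma> l)))
      = (\<Prod>k\<in>I. (if k = k0 then h (z k) else 1) * (\<Prod>l\<in>{l\<in>S. \<sigma> l = k}. f l (z k)))" for z
  proof -
    have "(\<Prod>l\<in>S. f l (z (\<sigma> l))) = (\<Prod>k\<in>I. \<Prod>l\<in>{l\<in>S. \<sigma> l = k}. f l (z (\<sigma> l)))"
      using S I(1) by (intro prod.group[symmetric]) auto
    also have "\<dots> = (\<Prod>k\<in>I. \<Prod>l\<in>{l\<in>S. \<sigma> l = k}. f l (z k))"
      by (intro prod.cong) auto
    finally show ?thesis
      using I by (simp add: prod.distrib)
  qed
  then have "(\<integral>\<^sup>+z. h (z k0) * (\<Prod>l\<in>S. f l (z (\<sigma> l))) \<partial>PiM I (\<lambda>_. J))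
      = (\<integral>\<^sup>+z. (\<Prod>k\<in>I. (if k = k0 then h (z k) else 1) * (\<Prod>l\<in>{l\<in>S. \<sigma> l = k}. f l (z k)))
          \<partial>PiM I (\<lambda>_. J))"
    by simp
  also have "\<dots> = (\<Prod>k\<in>I. \<integral>\<^sup>+x. (if k = k0 then h x else 1) * (\<Prod>l\<in>{l\<in>S. \<sigma> l = k}. f l x) \<partial>J)"
    using I(1) by (rule product_nn_integral_prod) measurable
  finally show ?thesis .
qed

locale cp_likelihood = prob_space J for J :: "'x measure" +
  fixes p :: "'x \<Rightarrow> 'y \<Rightarrow> real" and y :: "nat \<Rightarrow> 'y" and n :: nat
  assumes space_J: "space J = UNIV"
    and measurable_p: "\<And>v. (\<lambda>x. p x v) \<in> borel_measurable J"
    and segment_pos: "\<And>a b. 0 < a \<Longrightarrow> a \<le> b \<Longrightarrow> b \<le> n \<Longrightarrow>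
      0 < (\<integral>\<^sup>+x. (\<Prod>l\<in>{a..b}. ennreal (p x (y l))) \<partial>J)"
    and segment_finite: "\<And>a b. 0 < a \<Longrightarrow> a \<le> b \<Longrightarrow> b \<le> n \<Longrightarrow>
      (\<integral>\<^sup>+x. (\<Prod>l\<in>{a..b}. ennreal (p x (y l))) \<partial>J) < \<infinity>"
begin

definition cond_lik :: "nat \<Rightarrow> nat \<Rightarrow> 'x set \<Rightarrow> (nat \<Rightarrow> nat) \<Rightarrow> ennreal" where
  "cond_lik i m A c = (\<integral>\<^sup>+z. indicator A (z (max 1 (c i)))
     * (\<Prod>l\<in>{1..m}. ennreal (p (z (max 1 (c l))) (y l))) \<partial>PiM {1..n} (\<lambda>_. J))"

text \<open>After a changepoint at i + 1, the observations i + 1..n are explained by draws z k with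
k > i that no earlier observation uses; each block {l. max 1 (c l) = k} gives one factor.\<close>

definition future_lik :: "nat \<Rightarrow> (nat \<Rightarrow> nat) \<Rightarrow> ennreal" where
  "future_lik i c = (\<Prod>k\<in>{1..n}. \<integral>\<^sup>+x. (\<Prod>l\<in>{l\<in>{Suc i..n}. max 1 (c l) = k}. ennreal (p x (y l))) \<partial>J)"

lemma measurable_p_ennreal [measurable]: "(\<lambda>x. ennreal (p x v)) \<in> borel_measurable J"
  using measurable_p[of v] by measurable

lemma cond_lik_local:
  assumes "\<forall>l\<le>i. c l = c' l"
  shows "cond_lik i i A c = cond_lik i i A c'"
  unfolding cond_lik_def using assms
  by (intro nn_integral_cong arg_cong2[where f = "(*)"] prod.cong) auto

lemma future_lik_local:
  assumes "\<forall>l\<in>{Suc i..n}. c l = c' l"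
  shows "future_lik i c = future_lik i c'"
  unfolding future_lik_def using assms
  by (intro prod.cong nn_integral_cong arg_cong2[where f = prod] Collect_cong) auto

lemma cond_lik_split:
  assumes c: "c \<in> set_pmf (cp_path q n)" and i: "0 < i" "i < n" and ci: "c (Suc i) = Suc i"
    and A: "A \<in> sets J"
  shows "cond_lik i n A c = cond_lik i i A c * future_lik i c"
proof -
  let ?s = "\<lambda>l. max 1 (c l)"
  let ?f = "\<lambda>l x. ennreal (p x (y l))"
  let ?g = "\<lambda>S k x. (if k = ?s i then indicator A x else 1) * (\<Prod>l\<in>{l\<in>S. ?s l = k}. ?f l x)"
  have le: "c l \<le> l" for l
    using cp_path_le[OF c] .
  have past: "?s l \<le> i \<longleftrightarrow> l \<le> i" if "l \<le> n" for l
  proof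
    assume "?s l \<le> i"
    moreover have "Suc i \<le> c l" if "Suc i \<le> l"
      using mono_onD[OF cp_path_mono[OF c], of "Suc i" l] ci i \<open>l \<le> n\<close> that by simp
    ultimately show "l \<le> i" by linarith
  qed (use le[of l] i in auto)
  have grouped: "cond_lik i m A c = (\<Prod>k\<in>{1..n}. \<integral>\<^sup>+x. ?g {1..m} k x \<partial>J)" if "m \<le> n" for m
    unfolding cond_lik_def
  proof (rule nn_integral_PiM_grouped_prod)
    show "sigma_finite_measure J" by (rule prob_space_imp_sigma_finite) (rule prob_space_axioms)
    show "?s i \<in> {1..n}" using le[of i] i by auto
    show "?s ` {1..m} \<subseteq> {1..n}" using that by (auto simp: image_subset_iff intro: le_trans[OF le])
  qed (use A in auto)
  have "(\<integral>\<^sup>+x. ?g {1..n} k x \<partial>J)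
      = (\<integral>\<^sup>+x. ?g {1..i} k x \<partial>J) * (\<integral>\<^sup>+x. (\<Prod>l\<in>{l\<in>{Suc i..n}. ?s l = k}. ?f l x) \<partial>J)" for k
  proof (cases "k \<le> i")
    case True
    then have e1: "{l\<in>{1..n}. ?s l = k} = {l\<in>{1..i}. ?s l = k}"
      and e2: "{l\<in>{Suc i..n}. ?s l = k} = {}"
      using past i by auto
    show ?thesis by (simp only: e1 e2 prod.empty) (simp add: emeasure_space_1)
  next
    case False
    then have e1: "{l\<in>{1..n}. ?s l = k} = {l\<in>{Suc i..n}. ?s l = k}"
      and e2: "{l\<in>{1..i}. ?s l = k} = {}" and "k \<noteq> ?s i"
      using past i by auto
    then show ?thesis by (simp only: e1 e2 prod.empty) (simp add: emeasure_space_1)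
  qed
  then have "(\<Prod>k\<in>{1..n}. \<integral>\<^sup>+x. ?g {1..n} k x \<partial>J)
      = (\<Prod>k\<in>{1..n}. \<integral>\<^sup>+x. ?g {1..i} k x \<partial>J) * future_lik i c"
    unfolding future_lik_def prod.distrib[symmetric] by (rule prod.cong[OF refl])
  then show ?thesis
    using grouped[of n] grouped[of i] i by simp
qed

lemma future_lik_pos_finite:
  assumes ci: "c (Suc i) = Suc i" and admissible: "cp_admissible (Suc i) n c"
  shows "0 < future_lik i c" and "future_lik i c < \<infinity>"
proof -
  let ?F = "\<lambda>k. \<integral>\<^sup>+x. (\<Prod>l\<in>{l\<in>{Suc i..n}. max 1 (c l) = k}. ennreal (p x (y l))) \<partial>J"
  have "mono_on {Suc i..n} c"
    using cp_admissible_mono[OF admissible] ci by simp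
  have "mono_on {Suc i..n} (\<lambda>l. max 1 (c l))"
  proof (rule mono_onI)
    fix r s assume "r \<in> {Suc i..n}" "s \<in> {Suc i..n}" "r \<le> s"
    then have "c r \<le> c s" using mono_onD[OF \<open>mono_on {Suc i..n} c\<close>] by blast
    then show "max 1 (c r) \<le> max 1 (c s)" by simp
  qed
  have F: "0 < ?F k \<and> ?F k < \<infinity>" for k
  proof -
    obtain u v where uv: "{l\<in>{Suc i..n}. max 1 (c l) = k} = {u..v}"
      using level_set_mono_on_interval[OF \<open>mono_on {Suc i..n} (\<lambda>l. max 1 (c l))\<close>] by blast
    show ?thesis
    proof (cases "u \<le> v")
      case True
      then have "u \<in> {Suc i..n}" "v \<in> {Suc i..n}"
        using uv by (auto simp: set_eq_iff)
      then show ?thesis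
        unfolding uv using True by (intro conjI segment_pos segment_finite) auto
    next
      case False
      then show ?thesis unfolding uv by (simp add: emeasure_space_1)
    qed
  qed
  show "0 < future_lik i c"
    unfolding future_lik_def using F by (simp add: zero_less_iff_neq_zero)
  show "future_lik i c < \<infinity>"
    unfolding future_lik_def using F by (simp add: less_top[symmetric] ennreal_prod_eq_top)
qed

lemma cp_renewal_future_lik_pos_finite:
  assumes "i < n"
  shows "0 < cp_renewal q (Suc i) (n - Suc i) (future_lik i)"
    and "cp_renewal q (Suc i) (n - Suc i) (future_lik i) < \<infinity>"
proof -
  have "0 < future_lik i c \<and> future_lik i c < \<infinity>"
    if "c \<in> set_pmf (cp_ext q (Suc i) (n - Suc i) (\<lambda>_. Suc i))" for c
    using set_cp_ext[OF that] assms future_lik_pos_finite[of c i] by simp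
  then show "0 < cp_renewal q (Suc i) (n - Suc i) (future_lik i)"
    and "cp_renewal q (Suc i) (n - Suc i) (future_lik i) < \<infinity>"
    unfolding cp_renewal_def using finite_set_cp_ext by (blast intro: nn_integral_pmf_pos_finite)+
qed

lemma measurable_cpX [measurable]:
  "cpX l \<in> measurable (measure_pmf P \<Otimes>\<^sub>M PiM {1..n} (\<lambda>_. J)) J"
  unfolding cpX_def
proof (rule measurable_compose_countable'[where f = "\<lambda>k \<omega>. snd \<omega> k"
      and g = "\<lambda>\<omega>. max 1 (fst \<omega> l)" and I = UNIV])
  fix k :: nat
  show "(\<lambda>\<omega>. snd \<omega> k) \<in> measurable (measure_pmf P \<Otimes>\<^sub>M PiM {1..n} (\<lambda>_. J)) J"
  proof (cases "k \<in> {1..n}")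
    case True
    then show ?thesis
      by (rule measurable_compose[OF measurable_snd measurable_component_singleton])
  next
    case False
    have "snd \<omega> k = undefined" if "\<omega> \<in> space (measure_pmf P \<Otimes>\<^sub>M PiM {1..n} (\<lambda>_. J))" for \<omega>
    proof -
      from that have "snd \<omega> \<in> PiE {1..n} (\<lambda>_. space J)"
        by (simp add: space_pair_measure mem_Times_iff space_PiM)
      then show ?thesis using False by (rule PiE_arb)
    qed
    then show ?thesis
      by (rule measurable_cong[THEN iffD2]) (simp_all add: measurable_const space_J)
  qed
next
  show "(\<lambda>\<omega>. max 1 (fst \<omega> l))
      \<in> measurable (measure_pmf P \<Otimes>\<^sub>M PiM {1..n} (\<lambda>_. J)) (count_space UNIV)"
    by (rule measurable_compose[OF measurable_fst]) simp
qed simp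

lemma nn_integral_cp_model:
  assumes "A \<in> sets J"
  shows "(\<integral>\<^sup>+\<omega>. indicator ({\<omega>. fst \<omega> \<in> E} \<inter> {\<omega>. cpX i \<omega> \<in> A}) \<omega> * cp_lik p y m \<omega> \<partial>cp_model q J n)
       = (\<integral>\<^sup>+c. indicator E c * cond_lik i m A c \<partial>cp_path q n)"
proof -
  let ?M = "measure_pmf (cp_path q n) \<Otimes>\<^sub>M PiM {1..n} (\<lambda>_. J)"
  let ?F = "\<lambda>\<omega>. indicator E (fst \<omega>) * (indicator A (cpX i \<omega>) * cp_lik p y m \<omega>)"
  interpret Z: sigma_finite_measure "PiM {1..n} (\<lambda>_. J)"
    by (intro prob_space_imp_sigma_finite prob_space_PiM prob_space_axioms)
  have [measurable]: "(\<lambda>\<omega>. indicator E (fst \<omega>) :: ennreal) \<in> borel_measurable ?M"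
    by (rule measurable_compose[OF measurable_fst]) simp
  have "?F \<in> borel_measurable ?M"
    using assms unfolding cp_lik_def by measurable
  have "(\<integral>\<^sup>+\<omega>. indicator ({\<omega>. fst \<omega> \<in> E} \<inter> {\<omega>. cpX i \<omega> \<in> A}) \<omega> * cp_lik p y m \<omega> \<partial>cp_model q J n)
      = (\<integral>\<^sup>+\<omega>. ?F \<omega> \<partial>?M)"
    unfolding cp_model_def by (intro nn_integral_cong) (simp split: split_indicator)
  also have "\<dots> = (\<integral>\<^sup>+c. \<integral>\<^sup>+z. ?F (c, z) \<partial>PiM {1..n} (\<lambda>_. J) \<partial>cp_path q n)"
    by (rule Z.nn_integral_fst[symmetric]) fact
  also have "\<dots> = (\<integral>\<^sup>+c. indicator E c * cond_lik i m A c \<partial>cp_path q n)"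
    unfolding cond_lik_def cp_lik_def cpX_def
    by (intro nn_integral_cong) (simp split: split_indicator)
  finally show ?thesis .
qed

lemma nn_integral_cp_model_at_changepoint:
  assumes i: "0 < i" "i < n" and j: "j \<le> i" and q: "0 \<le> q j (Suc i)" "q j (Suc i) \<le> 1"
    and B: "B \<in> sets J"
  shows "(\<integral>\<^sup>+\<omega>. indicator ({\<omega>. cpC i \<omega> = j \<and> cpC (Suc i) \<omega> = Suc i} \<inter> {\<omega>. cpX i \<omega> \<in> B}) \<omega>
           * cp_lik p y n \<omega> \<partial>cp_model q J n)
       = (\<integral>\<^sup>+\<omega>. indicator ({\<omega>. cpC i \<omega> = j} \<inter> {\<omega>. cpX i \<omega> \<in> B}) \<omega> * cp_lik p y i \<omega> \<partial>cp_model q J n)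
         * (ennreal (1 - q j (Suc i)) * cp_renewal q (Suc i) (n - Suc i) (future_lik i))"
proof -
  let ?E = "{c. c i = j \<and> c (Suc i) = Suc i}"
  have "(\<integral>\<^sup>+\<omega>. indicator ({\<omega>. cpC i \<omega> = j \<and> cpC (Suc i) \<omega> = Suc i} \<inter> {\<omega>. cpX i \<omega> \<in> B}) \<omega>
      * cp_lik p y n \<omega> \<partial>cp_model q J n) = (\<integral>\<^sup>+c. indicator ?E c * cond_lik i n B c \<partial>cp_path q n)"
    using nn_integral_cp_model[OF B, where E = ?E and i = i and m = n and q = q]
    by (simp add: cpC_def)
  also have "\<dots> = (\<integral>\<^sup>+c. indicator ?E c * cond_lik i i B c * future_lik i c \<partial>cp_path q n)"
    using cond_lik_split[OF _ i _ B]
    by (intro nn_integral_cong_AE) (auto simp: AE_measure_pmf_iff split: split_indicator)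
  also have "\<dots> = ennreal (1 - q j (Suc i)) * cp_renewal q (Suc i) (n - Suc i) (future_lik i)
      * (\<integral>\<^sup>+c. indicator {c. c i = j} c * cond_lik i i B c \<partial>cp_path q i)"
    using i(2) j q by (intro nn_integral_cp_path_changepoint cond_lik_local future_lik_local)
  also have "(\<integral>\<^sup>+c. indicator {c. c i = j} c * cond_lik i i B c \<partial>cp_path q i)
      = (\<integral>\<^sup>+c. indicator {c. c i = j} c * cond_lik i i B c \<partial>cp_path q n)"
    using i(2)
    by (intro nn_integral_cp_path_prefix[symmetric])
      (auto simp: indicator_def intro!: cond_lik_local)
  also have "\<dots> = (\<integral>\<^sup>+\<omega>. indicator ({\<omega>. cpC i \<omega> = j} \<inter> {\<omega>. cpX i \<omega> \<in> B}) \<omega>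
      * cp_lik p y i \<omega> \<partial>cp_model q J n)"
    using nn_integral_cp_model[OF B, where E = "{c. c i = j}" and i = i and m = i and q = q]
    by (simp add: cpC_def)
  finally show ?thesis by (simp only: mult.commute)
qed

lemma cp_post_at_changepoint:
  assumes i: "0 < i" "i < n" and j: "j \<le> i" and q: "0 \<le> q j (Suc i)" "q j (Suc i) \<le> 1"
    and pos: "0 < measure_pmf.prob (cp_path q n) {c. c i = j \<and> c (Suc i) = Suc i}"
    and A: "A \<in> sets J"
  shows "cp_post (cp_model q J n) (cp_lik p y n)
           {\<omega>. cpC i \<omega> = j \<and> cpC (Suc i) \<omega> = Suc i} {\<omega>. cpX i \<omega> \<in> A}
       = cp_post (cp_model q J n) (cp_lik p y i) {\<omega>. cpC i \<omega> = j} {\<omega>. cpX i \<omega> \<in> A}"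
proof -
  let ?W = "ennreal (1 - q j (Suc i)) * cp_renewal q (Suc i) (n - Suc i) (future_lik i)"
  have "q j (Suc i) < 1"
    using cp_stay_prob_lt_1[OF i(2) j q pos] .
  then have "?W \<noteq> 0" and "?W \<noteq> \<infinity>"
    using cp_renewal_future_lik_pos_finite[OF i(2), of q] by (auto simp: ennreal_mult_eq_top_iff)
  note at_changepoint =
    nn_integral_cp_model_at_changepoint[where i = i and j = j and q = q, OF i j q]
  have "UNIV \<in> sets J"
    using space_J sets.top[of J] by simp
  from at_changepoint[OF this]
  have "(\<integral>\<^sup>+\<omega>. indicator {\<omega>. cpC i \<omega> = j \<and> cpC (Suc i) \<omega> = Suc i} \<omega>
        * cp_lik p y n \<omega> \<partial>cp_model q J n)
      = (\<integral>\<^sup>+\<omega>. indicator {\<omega>. cpC i \<omega> = j} \<omega> * cp_lik p y i \<omega> \<partial>cp_model q J n) * ?W"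
    by simp
  then show ?thesis
    unfolding cp_post_def at_changepoint[OF A] by (rule ssubst) (rule divide_mult_eq; fact)
qed

end

theorem mainTheorem8:
  fixes J :: "'x::polish_space measure" and \<psi> :: "'y::polish_space measure"
    and p :: "'x \<Rightarrow> 'y \<Rightarrow> real" and q :: "nat \<Rightarrow> nat \<Rightarrow> real"
    and y :: "nat \<Rightarrow> 'y" and n :: nat
  assumes n_pos: "1 \<le> n"
    and J_prob: "prob_space J" and J_sets: "sets J = sets borel"
    and psi_sf: "sigma_finite_measure \<psi>" and psi_sets: "sets \<psi> = sets borel"
    and q_range: "\<forall>j i. j < i \<and> i \<le> n \<longrightarrow> 0 \<le> q j i \<and> q j i \<le> 1"
    and p_meas: "(\<lambda>(x, v). p x v) \<in> borel_measurable (J \<Otimes>\<^sub>M \<psi>)"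
    and p_nonneg: "\<forall>x v. 0 \<le> p x v"
    and p_density: "\<forall>x. (\<integral>\<^sup>+v. ennreal (p x v) \<partial>\<psi>) = 1"
    and seg_pos: "\<forall>j i. 0 < j \<and> j \<le> i \<and> i \<le> n \<longrightarrow>
                    0 < (\<integral>\<^sup>+x. (\<Prod>l\<in>{j..i}. ennreal (p x (y l))) \<partial>J)"
    and seg_fin: "\<forall>j i. 0 < j \<and> j \<le> i \<and> i \<le> n \<longrightarrow>
                    (\<integral>\<^sup>+x. (\<Prod>l\<in>{j..i}. ennreal (p x (y l))) \<partial>J) < \<infinity>"
  shows "(\<forall>i j. 0 < i \<and> i < n \<and> j \<le> i \<and>
            0 < measure_pmf.prob (cp_path q n) {c. c i = j \<and> c (Suc i) = Suc i} \<longrightarrow>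
            (\<forall>A \<in> sets J.
               cp_post (cp_model q J n) (cp_lik p y n)
                 {\<omega>. cpC i \<omega> = j \<and> cpC (Suc i) \<omega> = Suc i} {\<omega>. cpX i \<omega> \<in> A}
             = cp_post (cp_model q J n) (cp_lik p y i)
                 {\<omega>. cpC i \<omega> = j} {\<omega>. cpX i \<omega> \<in> A}))
       \<and> (\<forall>j. j \<le> n \<and> 0 < measure_pmf.prob (cp_path q n) {c. c n = j} \<longrightarrow>
            (\<forall>A \<in> sets J.
               cp_post (cp_model q J n) (cp_lik p y n) {\<omega>. cpC n \<omega> = j} {\<omega>. cpX n \<omega> \<in> A}
             = cp_post (cp_model q J n) (cp_lik p y n) {\<omega>. cpC n \<omega> = j} {\<omega>. cpX n \<omega> \<in> A}))"
proof -
  have "space J = UNIV" "space \<psi> = UNIV"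
    using sets_eq_imp_space_eq[OF J_sets] sets_eq_imp_space_eq[OF psi_sets] by simp_all
  moreover have "(\<lambda>x. p x v) \<in> borel_measurable J" for v
    using measurable_compose[OF measurable_Pair2'[of v \<psi> J] p_meas] \<open>space \<psi> = UNIV\<close> by simp
  ultimately interpret cp_likelihood J p y n
    using J_prob seg_pos seg_fin unfolding cp_likelihood_def cp_likelihood_axioms_def by blast
  have "cp_post (cp_model q J n) (cp_lik p y n)
          {\<omega>. cpC i \<omega> = j \<and> cpC (Suc i) \<omega> = Suc i} {\<omega>. cpX i \<omega> \<in> A}
      = cp_post (cp_model q J n) (cp_lik p y i) {\<omega>. cpC i \<omega> = j} {\<omega>. cpX i \<omega> \<in> A}"
    if "0 < i \<and> i < n \<and> j \<le> i \<and> 0 < measure_pmf.prob (cp_path q n) {c. c i = j \<and> c (Suc i) = Suc i}"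
      and "A \<in> sets J" for i j A
  proof (rule cp_post_at_changepoint)
    show "0 \<le> q j (Suc i)" "q j (Suc i) \<le> 1"
      using q_range that(1) by simp_all
  qed (use that in simp_all)
  then show ?thesis by blast \<comment> \<open>the second conjunct is an instance of reflexivity\<close>
qed

end
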